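(* Let $A=(a_{ij})$ and $B=(b_{ij})$ be two $4\times 4$ generalized tournament matrices with equal corresponding principal minors of orders $2$ and $3$. If $\mathcal{D}(A,B)$ and $\mathcal{E}(A,B)$ are both connected, then there exist a permutation matrix $P$ and real numbers $a,b\in[0,1]\setminus\{1/2\}$ such that $A=PM_{a,b}P^{t}$ and $B=PM_{1-a,b}P^{t}$. Moreover, $\det(A)=\det(B)$ if and only if $a=b$ or $a=1-b$.
   Context: A generalized tournament matrix of order $n$ is a real $n\times n$ matrix $M$ with nonnegative entries satisfying $M+M^{t}=J_n-I_n$. When $A,B$ have the same principal minors of order $2$, for $i\neq j$ one has $a_{ij}=b_{ij}$ or $a_{ij}=1-b_{ij}$; $\mathcal{E}(A,B)$ is the undirected graph on $\{1,2,3,4\}$ whose edges are the pairs $\{i,j\}$ with $a_{ij}=b_{ij}\neq 1/2$, and $\mathcal{D}(A,B)$ is the undirected graph on $\{1,2,3,4\}$ whose edges are the pairs $\{i,j\}$ with $a_{ij}=1-b_{ij}$ and $a_{ij}\neq 1/2$. For real $a,b$, $$M_{a,b}=\begin{pmatrix}0&a&b&b\\ 1-a&0&1-a&b\\ 1-b&a&0&a\\ 1-b&1-b&1-a&0\end{pmatrix}.$$ *)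

theory Defs
  imports "HOL-Analysis.Analysis"
begin

definition gen_tournament :: "real^'n^'n \<Rightarrow> bool" where
  "gen_tournament M \<longleftrightarrow> (\<forall>i j. 0 \<le> M$i$j) \<and>
     (\<forall>i j. M$i$j + M$j$i = (if i = j then 0 else 1))"

definition principal_minor :: "real^'n^'n \<Rightarrow> 'n set \<Rightarrow> real" where
  "principal_minor M S = (\<Sum>p\<in>{p. p permutes S}. of_int (sign p) * (\<Prod>i\<in>S. M$i$(p i)))"

definition E_graph :: "real^'n^'n \<Rightarrow> real^'n^'n \<Rightarrow> ('n \<times> 'n) set" where
  "E_graph A B = {(i,j). i \<noteq> j \<and> A$i$j = B$i$j \<and> A$i$j \<noteq> 1/2}"

definition D_graph :: "real^'n^'n \<Rightarrow> real^'n^'n \<Rightarrow> ('n \<times> 'n) set" where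
  "D_graph A B = {(i,j). i \<noteq> j \<and> A$i$j = 1 - B$i$j \<and> A$i$j \<noteq> 1/2}"

definition graph_connected :: "('n \<times> 'n) set \<Rightarrow> bool" where
  "graph_connected R \<longleftrightarrow> (\<forall>u v. (u, v) \<in> (R \<union> R\<inverse>)\<^sup>*)"

definition perm_matrix :: "('n \<Rightarrow> 'n) \<Rightarrow> real^'n^'n" where
  "perm_matrix \<sigma> = (\<chi> i j. if \<sigma> i = j then 1 else 0)"

definition is_perm_matrix :: "real^'n^'n \<Rightarrow> bool" where
  "is_perm_matrix P \<longleftrightarrow> (\<exists>\<sigma>. \<sigma> permutes (UNIV::'n set) \<and> P = perm_matrix \<sigma>)"

definition Mab :: "real \<Rightarrow> real \<Rightarrow> real^4^4" where
  "Mab a b = vector [vector [0, a, b, b],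
                     vector [1 - a, 0, 1 - a, b],
                     vector [1 - b, a, 0, a],
                     vector [1 - b, 1 - b, 1 - a, 0]]"

end

theory Submission
  imports Defs
begin

text \<open>The graphs E(A,B) and D(A,B) have no common edge, and a connected graph on four
  vertices has at least three edges, so both are spanning trees of K_4, each the complement of
  the other. The complement of a star is disconnected, hence D is a path v1 v2 v3 v4 and E is
  the path v2 v4 v1 v3. For a generalized tournament the principal minor on {i, j, k} is
  xyz + (1 - x)(1 - y)(1 - z), where x, y, z are the entries along the cycle i, j, k. Comparing
  it for A and B on the four triangles gives one linear relation per triangle, and together they
  force A, with vertices relabelled by v, to be M_{a,b} for a = a_{v1 v2}, b = a_{v1 v3}. The
  hypotheses are symmetric in A and B, so B is M_{1-a,b} for the same labelling. Finally
  det M_{a,b} - det M_{1-a,b} = -(a - b)(a + b - 1)(2a - 1)(2b - 1).\<close>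

lemma gen_tournament_diag:
  "gen_tournament M \<Longrightarrow> M$i$i = 0"
  unfolding gen_tournament_def by (metis add_nonneg_eq_0_iff)

lemma gen_tournament_flip:
  "gen_tournament M \<Longrightarrow> i \<noteq> j \<Longrightarrow> M$j$i = 1 - M$i$j"
  unfolding gen_tournament_def by (metis add_diff_cancel_left')

lemma gen_tournament_bounds:
  assumes "gen_tournament M"
  shows "0 \<le> M$i$j" and "M$i$j \<le> 1"
proof -
  have "0 \<le> M$i$j" "0 \<le> M$j$i" "M$i$j + M$j$i = (if i = j then 0 else 1)"
    using assms by (auto simp: gen_tournament_def)
  then show "0 \<le> M$i$j" and "M$i$j \<le> 1"
    by (auto split: if_splits)
qed

text \<open>Column indices are relabelled by c so that expansion along a row
  (leibniz_sum_insert) stays within this family.\<close>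
definition leibniz_sum :: "'a::comm_ring_1^'n^'n \<Rightarrow> 'n set \<Rightarrow> ('n \<Rightarrow> 'n) \<Rightarrow> 'a" where
  "leibniz_sum M S c = (\<Sum>p\<in>{p. p permutes S}. of_int (sign p) * (\<Prod>i\<in>S. M$i$c (p i)))"

lemma principal_minor_eq_leibniz_sum: "principal_minor M S = leibniz_sum M S id"
  by (simp add: principal_minor_def leibniz_sum_def)

lemma det_eq_leibniz_sum: "det M = leibniz_sum M UNIV id"
  by (simp add: det_def leibniz_sum_def)

lemma leibniz_sum_empty [simp]: "leibniz_sum M {} c = 1"
  by (simp add: leibniz_sum_def)

lemma leibniz_sum_insert:
  assumes "finite S" "a \<notin> S"
  shows "leibniz_sum M (insert a S) c =
    (\<Sum>b\<in>insert a S. (if a = b then 1 else -1) * M$a$c b *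
       leibniz_sum M S (c \<circ> Transposition.transpose a b))"
proof -
  have "of_int (sign (Transposition.transpose a b \<circ> q)) *
        (\<Prod>i\<in>insert a S. M$i$c ((Transposition.transpose a b \<circ> q) i)) =
      (if a = b then 1 else -1) * M$a$c b *
        (of_int (sign q) * (\<Prod>i\<in>S. M$i$(c \<circ> Transposition.transpose a b) (q i)))"
    if "q permutes S" for b q
  proof -
    have "permutation q"
      using that assms(1) permutation_permutes by blast
    then have "sign (Transposition.transpose a b \<circ> q) = sign (Transposition.transpose a b) * sign q"
      by (rule sign_compose[OF permutation_swap_id])
    moreover have "q a = a"
      using that assms(2) by (rule permutes_not_in)
    ultimately show ?thesis
      using assms by (simp add: sign_swap_id)
  qed
  then show ?thesis
    unfolding leibniz_sum_def sum_over_permutations_insert[OF assms]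
    by (simp add: sum_distrib_left)
qed

lemma gen_tournament_principal_minor_3:
  assumes "gen_tournament M" "i \<noteq> j" "j \<noteq> k" "k \<noteq> i"
  shows "principal_minor M {i, j, k} =
    M$i$j * M$j$k * M$k$i + (1 - M$i$j) * (1 - M$j$k) * (1 - M$k$i)"
  using assms
  by (simp add: principal_minor_eq_leibniz_sum leibniz_sum_insert gen_tournament_diag
      gen_tournament_flip[of M j i] gen_tournament_flip[of M k j] gen_tournament_flip[of M i k]
      algebra_simps)

lemma E_graph_sym: "gen_tournament A \<Longrightarrow> gen_tournament B \<Longrightarrow> sym (E_graph A B)"
  by (auto simp: sym_def E_graph_def gen_tournament_flip)

lemma D_graph_sym: "gen_tournament A \<Longrightarrow> gen_tournament B \<Longrightarrow> sym (D_graph A B)"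
  by (auto simp: sym_def D_graph_def gen_tournament_flip)

lemma E_graph_Int_D_graph: "E_graph A B \<inter> D_graph A B = {}"
  by (auto simp: E_graph_def D_graph_def)

lemma E_graph_commute: "E_graph B A = E_graph A B"
  by (auto simp: E_graph_def)

lemma D_graph_commute: "D_graph B A = D_graph A B"
  by (auto simp: D_graph_def)

lemma graph_connected_cut:
  assumes "graph_connected R" "sym R" "u \<in> C" "v \<notin> C"
  shows "\<exists>x\<in>C. \<exists>y. y \<notin> C \<and> (x, y) \<in> R"
proof -
  have "(u, v) \<in> (R \<union> R\<inverse>)\<^sup>*" using assms(1) by (simp add: graph_connected_def)
  then show ?thesis
    using assms(2-4) by (induction rule: rtrancl_induct) (auto simp: sym_def)
qed

lemma exists_4: "(\<exists>x::4. P x) \<longleftrightarrow> P 1 \<or> P 2 \<or> P 3 \<or> P 4"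
  by (metis exhaust_4)

text \<open>One crossing edge for each of the cuts {1}, {2}, {3}, {4}, {1,2}, {1,3}, {1,4}.\<close>
lemma graph_connected_4_cuts:
  fixes R :: "(4 \<times> 4) set"
  assumes "graph_connected R" "sym R"
  shows "(1,2) \<in> R \<or> (1,3) \<in> R \<or> (1,4) \<in> R"
    and "(1,2) \<in> R \<or> (2,3) \<in> R \<or> (2,4) \<in> R"
    and "(1,3) \<in> R \<or> (2,3) \<in> R \<or> (3,4) \<in> R"
    and "(1,4) \<in> R \<or> (2,4) \<in> R \<or> (3,4) \<in> R"
    and "(1,3) \<in> R \<or> (1,4) \<in> R \<or> (2,3) \<in> R \<or> (2,4) \<in> R"
    and "(1,2) \<in> R \<or> (1,4) \<in> R \<or> (2,3) \<in> R \<or> (3,4) \<in> R"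
    and "(1,2) \<in> R \<or> (1,3) \<in> R \<or> (2,4) \<in> R \<or> (3,4) \<in> R"
proof -
  note cut = graph_connected_cut[OF assms]
  have s: "(y, x) \<in> R \<longleftrightarrow> (x, y) \<in> R" for x y
    using assms(2) by (auto simp: sym_def)
  show "(1,2) \<in> R \<or> (1,3) \<in> R \<or> (1,4) \<in> R"
    using cut[of 1 "{1}" 2] by (simp add: exists_4)
  show "(1,2) \<in> R \<or> (2,3) \<in> R \<or> (2,4) \<in> R"
    using cut[of 2 "{2}" 1] by (simp add: exists_4 s[of 1 2])
  show "(1,3) \<in> R \<or> (2,3) \<in> R \<or> (3,4) \<in> R"
    using cut[of 3 "{3}" 1] by (simp add: exists_4 s[of 1 3] s[of 2 3])
  show "(1,4) \<in> R \<or> (2,4) \<in> R \<or> (3,4) \<in> R"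
    using cut[of 4 "{4}" 1] by (simp add: exists_4 s[of 1 4] s[of 2 4] s[of 3 4])
  show "(1,3) \<in> R \<or> (1,4) \<in> R \<or> (2,3) \<in> R \<or> (2,4) \<in> R"
    using cut[of 1 "{1,2}" 3] by (simp add: exists_4)
  show "(1,2) \<in> R \<or> (1,4) \<in> R \<or> (2,3) \<in> R \<or> (3,4) \<in> R"
    using cut[of 1 "{1,3}" 2] by (simp add: exists_4 s[of 2 3])
  show "(1,2) \<in> R \<or> (1,3) \<in> R \<or> (2,4) \<in> R \<or> (3,4) \<in> R"
    using cut[of 1 "{1,4}" 2] by (simp add: exists_4 s[of 2 4] s[of 3 4])
qed

lemma permutation_of_distinct_4:
  assumes "distinct [v1, v2, v3, v4 :: 4]"
  obtains f where "f permutes UNIV" "f 1 = v1" "f 2 = v2" "f 3 = v3" "f 4 = v4"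
proof
  define f :: "4 \<Rightarrow> 4"
    where "f i = (if i = 1 then v1 else if i = 2 then v2 else if i = 3 then v3 else v4)" for i
  have "inj f"
  proof
    fix i j assume "f i = f j"
    then show "i = j"
      using assms exhaust_4[of i] exhaust_4[of j] by (auto simp: f_def)
  qed
  then show "f permutes UNIV"
    by (auto intro!: bij_imp_permutes simp: bij_betw_def finite_UNIV_inj_surj)
  show "f 1 = v1" "f 2 = v2" "f 3 = v3" "f 4 = v4"
    by (simp_all add: f_def)
qed

lemma complementary_paths_4:
  fixes E D :: "(4 \<times> 4) set"
  assumes "sym E" "sym D" "E \<inter> D = {}" "graph_connected E" "graph_connected D"
  obtains f where "f permutes UNIV" "(f 1, f 2) \<in> D" "(f 2, f 3) \<in> D" "(f 3, f 4) \<in> D"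
    "(f 1, f 3) \<in> E" "(f 1, f 4) \<in> E" "(f 2, f 4) \<in> E"
proof -
  define path where "path v1 v2 v3 v4 \<longleftrightarrow> distinct [v1, v2, v3, v4] \<and>
    (v1, v2) \<in> D \<and> (v2, v3) \<in> D \<and> (v3, v4) \<in> D \<and> (v1, v3) \<in> E \<and> (v1, v4) \<in> E \<and> (v2, v4) \<in> E"
    for v1 v2 v3 v4 :: 4
  have sE: "(y, x) \<in> E \<longleftrightarrow> (x, y) \<in> E" and sD: "(y, x) \<in> D \<longleftrightarrow> (x, y) \<in> D" for x y
    using assms(1,2) by (auto simp: sym_def)
  have "(x, y) \<notin> E \<or> (x, y) \<notin> D" for x y
    using assms(3) by blast
  note disjoint = this[of 1 2] this[of 1 3] this[of 1 4] this[of 2 3] this[of 2 4] this[of 3 4]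
  \<comment> \<open>Up to reversal K_4 has twelve Hamiltonian paths; D is one of them, E its complement.\<close>
  have "path 1 2 3 4 \<or> path 1 2 4 3 \<or> path 1 3 2 4 \<or> path 1 3 4 2 \<or> path 1 4 2 3 \<or> path 1 4 3 2 \<or>
    path 2 1 3 4 \<or> path 2 1 4 3 \<or> path 2 3 1 4 \<or> path 2 4 1 3 \<or> path 3 1 2 4 \<or> path 3 2 1 4"
    using disjoint graph_connected_4_cuts[OF assms(4,1)] graph_connected_4_cuts[OF assms(5,2)]
    unfolding path_def
    by (simp add: sE[of 1 2] sE[of 1 3] sE[of 1 4] sE[of 2 3] sE[of 2 4] sE[of 3 4]
        sD[of 1 2] sD[of 1 3] sD[of 1 4] sD[of 2 3] sD[of 2 4] sD[of 3 4]) sat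
  then obtain v1 v2 v3 v4 where path: "path v1 v2 v3 v4"
    by blast
  then have "distinct [v1, v2, v3, v4]"
    unfolding path_def by blast
  then obtain f where "f permutes UNIV" "f 1 = v1" "f 2 = v2" "f 3 = v3" "f 4 = v4"
    by (rule permutation_of_distinct_4)
  with path show thesis
    unfolding path_def by (intro that[of f]) simp_all
qed

lemma triangle_one_reversed:
  assumes "gen_tournament A" "gen_tournament B"
    and "principal_minor A {i, j, k} = principal_minor B {i, j, k}"
    and "(i, j) \<in> D_graph A B" "(j, k) \<in> E_graph A B" "(k, i) \<in> E_graph A B"
  shows "A$j$k + A$k$i = 1"
proof -
  have ne: "i \<noteq> j" "j \<noteq> k" "k \<noteq> i" and "A$i$j \<noteq> 1/2"
    and B: "B$i$j = 1 - A$i$j" "B$j$k = A$j$k" "B$k$i = A$k$i"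
    using assms(4-6) by (auto simp: D_graph_def E_graph_def)
  have "principal_minor A {i, j, k} - principal_minor B {i, j, k} =
      (2 * A$i$j - 1) * (A$j$k + A$k$i - 1)"
    by (simp add: gen_tournament_principal_minor_3[OF assms(1) ne]
        gen_tournament_principal_minor_3[OF assms(2) ne] B algebra_simps)
  with assms(3) \<open>A$i$j \<noteq> 1/2\<close> show ?thesis
    by simp
qed

lemma triangle_two_reversed:
  assumes "gen_tournament A" "gen_tournament B"
    and "principal_minor A {i, j, k} = principal_minor B {i, j, k}"
    and "(i, j) \<in> D_graph A B" "(j, k) \<in> D_graph A B" "(k, i) \<in> E_graph A B"
  shows "A$i$j + A$j$k = 1"
proof -
  have ne: "i \<noteq> j" "j \<noteq> k" "k \<noteq> i" and "A$k$i \<noteq> 1/2"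
    and B: "B$i$j = 1 - A$i$j" "B$j$k = 1 - A$j$k" "B$k$i = A$k$i"
    using assms(4-6) by (auto simp: D_graph_def E_graph_def)
  have "principal_minor A {i, j, k} - principal_minor B {i, j, k} =
      (2 * A$k$i - 1) * (A$i$j + A$j$k - 1)"
    by (simp add: gen_tournament_principal_minor_3[OF assms(1) ne]
        gen_tournament_principal_minor_3[OF assms(2) ne] B algebra_simps)
  with assms(3) \<open>A$k$i \<noteq> 1/2\<close> show ?thesis
    by simp
qed

lemma path_configuration_entries:
  assumes "gen_tournament A" "gen_tournament B"
    and minors: "\<And>S. card S = 3 \<Longrightarrow> principal_minor A S = principal_minor B S"
    and "distinct [v1, v2, v3, v4]"
    and D: "(v1, v2) \<in> D_graph A B" "(v2, v3) \<in> D_graph A B" "(v3, v4) \<in> D_graph A B"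
    and E: "(v1, v3) \<in> E_graph A B" "(v1, v4) \<in> E_graph A B" "(v2, v4) \<in> E_graph A B"
  shows "A$v2$v3 = 1 - A$v1$v2" "A$v3$v4 = A$v1$v2" "A$v2$v4 = A$v1$v3" "A$v1$v4 = A$v1$v3"
proof -
  have minor: "principal_minor A {u, v, w} = principal_minor B {u, v, w}"
    if "distinct [u, v, w]" for u v w
    using that by (intro minors) simp
  have "distinct [v1, v2, v3]" "distinct [v2, v3, v4]"
    "distinct [v1, v2, v4]" "distinct [v3, v4, v1]"
    using assms(4) by auto
  note minor = this[THEN minor]
  have E': "(v3, v1) \<in> E_graph A B" "(v4, v1) \<in> E_graph A B" "(v4, v2) \<in> E_graph A B"
    using E E_graph_sym[OF assms(1,2)] by (auto dest: symD)
  have "A$v1$v2 + A$v2$v3 = 1"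
    using triangle_two_reversed[OF assms(1,2) minor(1) D(1,2) E'(1)] .
  moreover have "A$v2$v3 + A$v3$v4 = 1"
    using triangle_two_reversed[OF assms(1,2) minor(2) D(2,3) E'(3)] .
  moreover have "A$v2$v4 + A$v4$v1 = 1"
    using triangle_one_reversed[OF assms(1,2) minor(3) D(1) E(3) E'(2)] .
  moreover have "A$v4$v1 + A$v1$v3 = 1"
    using triangle_one_reversed[OF assms(1,2) minor(4) D(3) E'(2) E(1)] .
  moreover have "A$v4$v1 = 1 - A$v1$v4"
    using assms(4) by (simp add: gen_tournament_flip[OF assms(1)])
  ultimately show "A$v2$v3 = 1 - A$v1$v2" "A$v3$v4 = A$v1$v2"
    "A$v2$v4 = A$v1$v3" "A$v1$v4 = A$v1$v3"
    by linarith+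
qed

lemma perm_matrix_conj_nth:
  "(perm_matrix \<sigma> ** M ** transpose (perm_matrix \<sigma>))$i$j = M$\<sigma> i$\<sigma> j"
proof -
  have delta: "(if l = k then 1 else 0) * x = (if l = k then x else 0)"
    "x * (if l = k then 1 else 0) = (if l = k then x else 0)" for x :: real and k l :: 'n
    by simp_all
  show ?thesis
    by (simp add: matrix_matrix_mult_def perm_matrix_def transpose_def sum_distrib_right delta)
qed

lemma perm_matrix_conj_eqI:
  assumes "f permutes UNIV" "\<And>i j. A$f i$f j = M$i$j"
  shows "A = perm_matrix (inv f) ** M ** transpose (perm_matrix (inv f))"
proof -
  have "A$i$j = M$inv f i$inv f j" for i j
    using assms(2)[of "inv f i" "inv f j"] permutes_inverses(1)[OF assms(1)] by simp
  then show ?thesis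
    by (simp add: vec_eq_iff perm_matrix_conj_nth)
qed

lemma det_perm_matrix_conj:
  assumes "\<sigma> permutes UNIV"
  shows "det (perm_matrix \<sigma> ** M ** transpose (perm_matrix \<sigma>)) = det M"
proof -
  have "perm_matrix \<sigma> ** M ** transpose (perm_matrix \<sigma>) = (\<chi> i. (\<chi> i j. M$i$\<sigma> j) $ \<sigma> i)"
    by (simp add: vec_eq_iff perm_matrix_conj_nth)
  then have "det (perm_matrix \<sigma> ** M ** transpose (perm_matrix \<sigma>)) =
      of_int (sign \<sigma>) * (of_int (sign \<sigma>) * det M)"
    by (simp only: det_permute_rows[OF assms] det_permute_columns[OF assms])
  then show ?thesis
    by (simp flip: mult.assoc of_int_mult)
qed

lemma is_perm_matrix_perm_matrix: "\<sigma> permutes UNIV \<Longrightarrow> is_perm_matrix (perm_matrix \<sigma>)"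
  by (auto simp: is_perm_matrix_def)

lemma vector_4 [simp]:
  "(vector [x, y, z, w] :: 'a::zero^4)$1 = x"
  "(vector [x, y, z, w] :: 'a::zero^4)$2 = y"
  "(vector [x, y, z, w] :: 'a::zero^4)$3 = z"
  "(vector [x, y, z, w] :: 'a::zero^4)$4 = w"
  unfolding vector_def by simp_all

lemma det_Mab_diff:
  "det (Mab a b) - det (Mab (1 - a) b) = - (a - b) * (a + b - 1) * (2 * a - 1) * (2 * b - 1)"
  unfolding det_eq_leibniz_sum UNIV_4
  by (simp add: leibniz_sum_insert Mab_def algebra_simps)

lemma det_Mab_eq_iff:
  assumes "a \<noteq> 1/2" "b \<noteq> 1/2"
  shows "det (Mab a b) = det (Mab (1 - a) b) \<longleftrightarrow> a = b \<or> a = 1 - b"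
  using det_Mab_diff[of a b] assms by auto

lemma path_configuration_conj_Mab:
  fixes A B :: "real^4^4"
  assumes "gen_tournament A" "gen_tournament B"
    and "\<And>S. card S = 3 \<Longrightarrow> principal_minor A S = principal_minor B S"
    and f: "f permutes UNIV"
    and "(f 1, f 2) \<in> D_graph A B" "(f 2, f 3) \<in> D_graph A B" "(f 3, f 4) \<in> D_graph A B"
    and "(f 1, f 3) \<in> E_graph A B" "(f 1, f 4) \<in> E_graph A B" "(f 2, f 4) \<in> E_graph A B"
  shows "A = perm_matrix (inv f) ** Mab (A$f 1$f 2) (A$f 1$f 3) ** transpose (perm_matrix (inv f))"
proof (rule perm_matrix_conj_eqI[OF f])
  have "distinct [f 1, f 2, f 3, f 4]"
    using permutes_inj[OF f] by (simp add: inj_eq)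
  note entries = path_configuration_entries[OF assms(1-3) this assms(5-10)]
  have flip: "A$f j$f i = 1 - A$f i$f j" if "i \<noteq> j" for i j
    using that permutes_inj[OF f] by (intro gen_tournament_flip[OF assms(1)]) (simp add: inj_eq)
  fix i j :: 4
  show "A$f i$f j = Mab (A$f 1$f 2) (A$f 1$f 3) $ i $ j"
    using exhaust_4[of i] exhaust_4[of j]
    by (elim disjE) (simp_all add: Mab_def entries gen_tournament_diag[OF assms(1)]
        flip[of 1 2] flip[of 1 3] flip[of 1 4] flip[of 2 3] flip[of 2 4] flip[of 3 4])
qed

theorem lemma4p5:
  fixes A B :: "real^4^4"
  assumes "gen_tournament A" and "gen_tournament B"
    and "\<forall>S. card S = 2 \<or> card S = 3 \<longrightarrow> principal_minor A S = principal_minor B S"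
    and "graph_connected (D_graph A B)" and "graph_connected (E_graph A B)"
  shows "\<exists>P a b. is_perm_matrix P \<and> a \<in> {0..1} - {1/2} \<and> b \<in> {0..1} - {1/2} \<and>
           A = P ** Mab a b ** transpose P \<and> B = P ** Mab (1 - a) b ** transpose P \<and>
           (det A = det B \<longleftrightarrow> a = b \<or> a = 1 - b)"
proof -
  have minors: "\<And>S. card S = 3 \<Longrightarrow> principal_minor A S = principal_minor B S"
    using assms(3) by blast
  obtain f where f: "f permutes UNIV"
    and D: "(f 1, f 2) \<in> D_graph A B" "(f 2, f 3) \<in> D_graph A B" "(f 3, f 4) \<in> D_graph A B"
    and E: "(f 1, f 3) \<in> E_graph A B" "(f 1, f 4) \<in> E_graph A B" "(f 2, f 4) \<in> E_graph A B"
    using complementary_paths_4[OF E_graph_sym D_graph_sym E_graph_Int_D_graph assms(5,4)] assms(1,2)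
    by metis
  define a b P where "a = A$f 1$f 2" and "b = A$f 1$f 3" and "P = perm_matrix (inv f)"
  have "B$f 1$f 2 = 1 - a" "B$f 1$f 3 = b" and a: "a \<noteq> 1/2" and b: "b \<noteq> 1/2"
    using D(1) E(1) by (auto simp: a_def b_def D_graph_def E_graph_def)
  moreover have "B = P ** Mab (B$f 1$f 2) (B$f 1$f 3) ** transpose P"
    using path_configuration_conj_Mab[of B A, OF assms(2,1) minors[symmetric] f] D E
    by (simp add: P_def D_graph_commute E_graph_commute)
  ultimately have B: "B = P ** Mab (1 - a) b ** transpose P"
    by simp
  have A: "A = P ** Mab a b ** transpose P"
    unfolding a_def b_def P_def by (rule path_configuration_conj_Mab[OF assms(1,2) minors f D E])
  have P: "is_perm_matrix P" "det (P ** M ** transpose P) = det M" for M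
    unfolding P_def using permutes_inv[OF f]
    by (simp_all add: is_perm_matrix_perm_matrix det_perm_matrix_conj)
  have "a \<in> {0..1}" "b \<in> {0..1}"
    unfolding a_def b_def using gen_tournament_bounds[OF assms(1)] by auto
  moreover have "det A = det B \<longleftrightarrow> a = b \<or> a = 1 - b"
    using det_Mab_eq_iff[OF a b] by (simp add: A B P(2))
  ultimately show ?thesis
    using a b A B P(1) by blast
qed

end
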